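(* In the setting of the context, for every integer $k\ge 1$ there is a constant $C_k$ (depending on $k$ and $p$, not on $N$) such that for all $N\ge 1$, \[ M_{2k}(N)\;\le\;(2k-1)!!+\frac{C_k}{N}, \] where $(2k-1)!!=(2k-1)(2k-3)\cdots 3\cdot 1$ is the $2k$-th moment of the standard Gaussian.
   Context: Let $p$ be a probability density on $\mathbb{R}$ with mean $0$, variance $1$ and finite moments of all orders. For $N\ge 1$, let $b_1,\dots,b_{N-1}$ be independent random variables with density $p$, set $b_0=0$, and let $A=A_N$ be the $N\times N$ real symmetric Toeplitz matrix with entries $a_{ij}=b_{|i-j|}$ ($1\le i,j\le N$). Let $\lambda_1(A),\dots,\lambda_N(A)$ be its eigenvalues. For an integer $k\ge 0$ define $M_k(A,N)=N^{-(k/2+1)}\sum_{i=1}^N\lambda_i(A)^k = N^{-(k/2+1)}\,\mathrm{Trace}(A^k)$, and $M_k(N)=\mathbb{E}[M_k(A,N)]$, the expectation over the random entries. *)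

theory Defs
  imports "HOL-Probability.Probability" "Jordan_Normal_Form.Matrix"
begin

definition good_density :: "(real \<Rightarrow> real) \<Rightarrow> bool" where
  "good_density p \<longleftrightarrow>
     p \<in> borel_measurable borel \<and> (\<forall>x. 0 \<le> p x) \<and>
     integrable lborel p \<and> (LINT x|lborel. p x) = 1 \<and>
     (\<forall>m::nat. integrable lborel (\<lambda>x. \<bar>x\<bar> ^ m * p x)) \<and>
     (LINT x|lborel. x * p x) = 0 \<and>
     (LINT x|lborel. x\<^sup>2 * p x) = 1"

definition toeplitz_space :: "(real \<Rightarrow> real) \<Rightarrow> nat \<Rightarrow> (nat \<Rightarrow> real) measure" where
  "toeplitz_space p N = PiM {1..<N} (\<lambda>_. density lborel (\<lambda>x. ennreal (p x)))"

text \<open>The N x N symmetric Toeplitz matrix a_ij = b_{|i-j|} with b_0 = 0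
  (0-based indices, which does not change |i-j|).\<close>
definition toeplitz_mat :: "nat \<Rightarrow> (nat \<Rightarrow> real) \<Rightarrow> real mat" where
  "toeplitz_mat N b = mat N N (\<lambda>(i, j).
      let d = nat \<bar>int i - int j\<bar> in if d = 0 then 0 else b d)"

definition mat_trace :: "real mat \<Rightarrow> real" where
  "mat_trace A = (\<Sum>i<dim_row A. A $$ (i, i))"

definition Mk_AN :: "nat \<Rightarrow> nat \<Rightarrow> (nat \<Rightarrow> real) \<Rightarrow> real" where
  "Mk_AN k N b = real N powr (-(real k / 2 + 1)) * mat_trace (toeplitz_mat N b ^\<^sub>m k)"

definition Mk :: "(real \<Rightarrow> real) \<Rightarrow> nat \<Rightarrow> nat \<Rightarrow> real" where
  "Mk p k N = (\<integral>b. Mk_AN k N b \<partial>toeplitz_space p N)"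

definition odd_double_fact :: "nat \<Rightarrow> nat" where
  "odd_double_fact k = (\<Prod>i\<in>{1..k}. 2 * i - 1)"

end

theory Submission
  imports Defs
begin

(* Expanding Trace(A^(2k)) over closed walks i_0, ..., i_2k = i_0 in {0..<N} and integrating
   term by term, a walk contributes the product over v of the moments E[b^(c_v)], where c_v is
   the number of its steps of length |i_(j+1) - i_j| = v.  This vanishes if a step has length 0
   (as b_0 = 0) or some length occurs exactly once, and it is 1 if every length that occurs
   occurs exactly twice.  In the remaining cases fewer than k lengths occur; there are only
   O(N^k) such walks, and their weights are bounded in terms of the moments of p.
   A walk in which every length occurs twice is compatible with one of the at most (2k-1)!!
   pairings of its 2k steps.  If all paired steps are opposite, the walk is determined by its
   start and the endpoints of the first step of each pair, so there are at most N^(k+1) of them.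
   Otherwise two paired steps are equal; as the steps of a closed walk sum to zero, this step
   is determined by the others, which leaves O(N^k) walks.  Dividing by N^(k+1) gives the
   bound. *)

section \<open>Powers of a matrix as sums over walks\<close>

definition walks :: "nat \<Rightarrow> nat \<Rightarrow> nat \<Rightarrow> nat \<Rightarrow> (nat \<Rightarrow> nat) set" where
  "walks n m x y = {f \<in> {..m} \<rightarrow>\<^sub>E {..<n}. f 0 = x \<and> f m = y}"

definition closed_walks :: "nat \<Rightarrow> nat \<Rightarrow> (nat \<Rightarrow> nat) set" where
  "closed_walks n m = {f \<in> {..m} \<rightarrow>\<^sub>E {..<n}. f 0 = f m}"

lemma finite_walks: "finite (walks n m x y)"
  unfolding walks_def by (rule finite_subset[of _ "{..m} \<rightarrow>\<^sub>E {..<n}"]) (auto intro: finite_PiE)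

lemma finite_closed_walks: "finite (closed_walks n m)"
  unfolding closed_walks_def
  by (rule finite_subset[of _ "{..m} \<rightarrow>\<^sub>E {..<n}"]) (auto intro: finite_PiE)

lemma closed_walksD:
  assumes "f \<in> closed_walks n m" "j \<le> m"
  shows "f j < n"
  using assms unfolding closed_walks_def by auto

lemma walks_0: "x < n \<Longrightarrow> walks n 0 x y = (if x = y then {\<lambda>i\<in>{..0}. x} else {})"
  unfolding walks_def by (auto simp: PiE_iff extensional_def)

lemma mat_pow_entry_eq_sum_walks:
  fixes A :: "'a::comm_semiring_1 mat"
  assumes A: "A \<in> carrier_mat n n" and "x < n" "y < n"
  shows "(A ^\<^sub>m m) $$ (x, y) = (\<Sum>f\<in>walks n m x y. \<Prod>j<m. A $$ (f j, f (Suc j)))"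
  using \<open>y < n\<close>
proof (induction m arbitrary: y)
  case 0
  then show ?case using A \<open>x < n\<close> by (simp add: walks_0)
next
  case (Suc m)
  let ?w = "\<lambda>m f. \<Prod>j<m. A $$ (f j, f (Suc j))"
  have "(A ^\<^sub>m Suc m) $$ (x, y) = (\<Sum>z<n. (A ^\<^sub>m m) $$ (x, z) * A $$ (z, y))"
    using A Suc.prems \<open>x < n\<close> by (simp add: scalar_prod_def atLeast0LessThan)
  also have "\<dots> = (\<Sum>z<n. \<Sum>g\<in>walks n m x z. ?w m g * A $$ (z, y))"
    using Suc.IH by (simp add: sum_distrib_right)
  also have "\<dots> = (\<Sum>z<n. \<Sum>f\<in>{f \<in> walks n (Suc m) x y. f m = z}. ?w (Suc m) f)"
  proof (rule sum.cong[OF refl])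
    fix z assume "z \<in> {..<n}"
    show "(\<Sum>g\<in>walks n m x z. ?w m g * A $$ (z, y)) =
        (\<Sum>f\<in>{f \<in> walks n (Suc m) x y. f m = z}. ?w (Suc m) f)"
    proof (rule sum.reindex_bij_witness[where i = "\<lambda>f. restrict f {..m}"
          and j = "\<lambda>g. g(Suc m := y)"])
      fix f assume f: "f \<in> {f \<in> walks n (Suc m) x y. f m = z}"
      show "(restrict f {..m})(Suc m := y) = f"
        using f by (auto simp: walks_def PiE_iff extensional_def le_Suc_eq)
      show "restrict f {..m} \<in> walks n m x z"
        using f by (auto simp: walks_def PiE_iff extensional_def le_Suc_eq)
    next
      fix g assume g: "g \<in> walks n m x z"
      show "restrict (g(Suc m := y)) {..m} = g"
        using g by (auto simp: walks_def PiE_iff extensional_def)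
      show "g(Suc m := y) \<in> {f \<in> walks n (Suc m) x y. f m = z}"
        using g Suc.prems by (auto simp: walks_def PiE_iff extensional_def)
      have "?w m (g(Suc m := y)) = ?w m g" by (intro prod.cong) auto
      then show "?w (Suc m) (g(Suc m := y)) = ?w m g * A $$ (z, y)"
        using g by (simp add: walks_def prod.lessThan_Suc)
    qed
  qed
  also have "\<dots> = (\<Sum>f\<in>walks n (Suc m) x y. ?w (Suc m) f)"
    by (rule sum.group) (use finite_walks in \<open>auto simp: walks_def PiE_iff\<close>)
  finally show ?case .
qed

lemma trace_mat_pow_eq_sum_closed_walks:
  fixes A :: "'a::comm_semiring_1 mat"
  assumes A: "A \<in> carrier_mat n n"
  shows "(\<Sum>i<n. (A ^\<^sub>m m) $$ (i, i)) = (\<Sum>f\<in>closed_walks n m. \<Prod>j<m. A $$ (f j, f (Suc j)))"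
proof -
  have "walks n m i i = {f \<in> closed_walks n m. f 0 = i}" for i
    unfolding walks_def closed_walks_def by auto
  then have "(\<Sum>i<n. (A ^\<^sub>m m) $$ (i, i)) =
      (\<Sum>i<n. \<Sum>f\<in>{f \<in> closed_walks n m. f 0 = i}. \<Prod>j<m. A $$ (f j, f (Suc j)))"
    using mat_pow_entry_eq_sum_walks[OF A] by simp
  also have "\<dots> = (\<Sum>f\<in>closed_walks n m. \<Prod>j<m. A $$ (f j, f (Suc j)))"
    by (rule sum.group) (use finite_closed_walks in \<open>auto simp: closed_walks_def PiE_iff\<close>)
  finally show ?thesis .
qed

section \<open>Pairings\<close>

definition pairings :: "'a set \<Rightarrow> ('a \<Rightarrow> 'a) set" where
  "pairings S = {\<sigma> \<in> S \<rightarrow>\<^sub>E S. \<forall>x\<in>S. \<sigma> x \<noteq> x \<and> \<sigma> (\<sigma> x) = x}"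

lemma pairingsD:
  assumes "\<sigma> \<in> pairings S" "x \<in> S"
  shows "\<sigma> x \<in> S" "\<sigma> x \<noteq> x" "\<sigma> (\<sigma> x) = x"
  using assms unfolding pairings_def by auto

lemma finite_pairings: "finite S \<Longrightarrow> finite (pairings S)"
  unfolding pairings_def by (rule finite_subset[of _ "S \<rightarrow>\<^sub>E S"]) (auto intro: finite_PiE)

lemma odd_double_fact_Suc: "odd_double_fact (Suc k) = (2 * k + 1) * odd_double_fact k"
  unfolding odd_double_fact_def by (simp add: prod.cl_ivl_Suc mult.commute)

lemma restrict_pairing_remove_pair:
  assumes \<sigma>: "\<sigma> \<in> pairings S" and x: "x \<in> S"
  shows "restrict \<sigma> (S - {x, \<sigma> x}) \<in> pairings (S - {x, \<sigma> x})"
proof -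
  have "\<sigma> z \<in> S - {x, \<sigma> x}" if z: "z \<in> S - {x, \<sigma> x}" for z
  proof -
    have "\<sigma> z \<in> S" "\<sigma> (\<sigma> z) = z" "z \<noteq> x" using pairingsD[OF \<sigma>] z by auto
    moreover have "\<sigma> z \<noteq> x" using z \<open>\<sigma> (\<sigma> z) = z\<close> by auto
    moreover have "\<sigma> z \<noteq> \<sigma> x" using \<open>\<sigma> (\<sigma> z) = z\<close> \<open>z \<noteq> x\<close> pairingsD(3)[OF \<sigma> x] by metis
    ultimately show ?thesis by simp
  qed
  then show ?thesis
    using pairingsD[OF \<sigma>] unfolding pairings_def by auto
qed

lemma card_pairings_with_value_le:
  assumes "finite S" "x \<in> S" "y \<in> S" "y \<noteq> x"
  shows "card {\<sigma> \<in> pairings S. \<sigma> x = y} \<le> card (pairings (S - {x, y}))"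
proof (rule card_inj_on_le[where f = "\<lambda>\<sigma>. restrict \<sigma> (S - {x, y})"])
  show "inj_on (\<lambda>\<sigma>. restrict \<sigma> (S - {x, y})) {\<sigma> \<in> pairings S. \<sigma> x = y}"
  proof (rule inj_onI, rule ext)
    fix \<sigma> \<tau> z
    assume \<sigma>: "\<sigma> \<in> {\<sigma> \<in> pairings S. \<sigma> x = y}" and \<tau>: "\<tau> \<in> {\<sigma> \<in> pairings S. \<sigma> x = y}"
      and eq: "restrict \<sigma> (S - {x, y}) = restrict \<tau> (S - {x, y})"
    have "\<sigma> x = y" "\<tau> x = y" "\<sigma> y = x" "\<tau> y = x"
      using \<sigma> \<tau> assms(2) unfolding pairings_def by auto
    moreover have "\<sigma> z = \<tau> z" if "z \<in> S - {x, y}"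
      using fun_cong[OF eq, of z] that by simp
    moreover have "\<sigma> z = \<tau> z" if "z \<notin> S"
      using \<sigma> \<tau> that unfolding pairings_def by (auto simp: PiE_iff extensional_def)
    ultimately show "\<sigma> z = \<tau> z" by (cases "z \<in> S"; cases "z = x"; cases "z = y") auto
  qed
  show "(\<lambda>\<sigma>. restrict \<sigma> (S - {x, y})) ` {\<sigma> \<in> pairings S. \<sigma> x = y} \<subseteq> pairings (S - {x, y})"
    using restrict_pairing_remove_pair assms(2) by auto
qed (use assms in \<open>auto intro: finite_pairings\<close>)

lemma card_pairings_le:
  assumes "finite S" "card S = 2 * k"
  shows "card (pairings S) \<le> odd_double_fact k"
  using assms
proof (induction k arbitrary: S)
  case 0
  then show ?case by (simp add: pairings_def odd_double_fact_def)
next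
  case (Suc k)
  from Suc.prems obtain x where x: "x \<in> S" by fastforce
  have fibre: "card {\<sigma> \<in> pairings S. \<sigma> x = y} \<le> odd_double_fact k" if y: "y \<in> S - {x}" for y
  proof -
    have "card {x, y} = 2" using y by auto
    then have "card (S - {x, y}) = 2 * k" using Suc.prems x y by (simp add: card_Diff_subset)
    then show ?thesis
      using card_pairings_with_value_le[of S x y] Suc.IH[of "S - {x, y}"] Suc.prems x y by simp
  qed
  have "pairings S = (\<Union>y\<in>S - {x}. {\<sigma> \<in> pairings S. \<sigma> x = y})"
    using x unfolding pairings_def by (auto simp: PiE_iff)
  then have "card (pairings S) = card (\<Union>y\<in>S - {x}. {\<sigma> \<in> pairings S. \<sigma> x = y})"
    by (rule arg_cong)
  also have "\<dots> \<le> (\<Sum>y\<in>S - {x}. card {\<sigma> \<in> pairings S. \<sigma> x = y})"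
    using Suc.prems by (intro card_UN_le) simp
  also have "\<dots> \<le> (\<Sum>y\<in>S - {x}. odd_double_fact k)"
    by (rule sum_mono) (rule fibre)
  also have "\<dots> = odd_double_fact (Suc k)" using Suc.prems x by (simp add: odd_double_fact_Suc)
  finally show ?case .
qed

lemma pairing_exists_if_values_doubled:
  assumes two: "\<And>j. j \<in> S \<Longrightarrow> card {i \<in> S. g i = g j} = 2"
  shows "\<exists>\<sigma>\<in>pairings S. \<forall>j\<in>S. g (\<sigma> j) = g j"
proof -
  have partner: "\<exists>!i. i \<in> S \<and> i \<noteq> j \<and> g i = g j" if j: "j \<in> S" for j
  proof -
    obtain a b where ab: "{i \<in> S. g i = g j} = {a, b}" "a \<noteq> b"
      using two[OF j] by (auto simp: card_2_iff)
    then have mem: "i \<in> S \<and> g i = g j \<longleftrightarrow> i = a \<or> i = b" for i by blast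
    show ?thesis
    proof (cases "j = a")
      case True
      then show ?thesis using mem ab(2) by (intro ex1I[of _ b]) auto
    next
      case False
      then have "j = b" using mem j by blast
      then show ?thesis using mem ab(2) by (intro ex1I[of _ a]) auto
    qed
  qed
  define \<sigma> where "\<sigma> = (\<lambda>j\<in>S. THE i. i \<in> S \<and> i \<noteq> j \<and> g i = g j)"
  have \<sigma>: "\<sigma> j \<in> S \<and> \<sigma> j \<noteq> j \<and> g (\<sigma> j) = g j" if "j \<in> S" for j
    using theI'[OF partner[OF that]] that unfolding \<sigma>_def by simp
  have \<sigma>\<sigma>: "\<sigma> (\<sigma> j) = j" if j: "j \<in> S" for j
  proof -
    have "\<sigma> j \<in> S" "j \<noteq> \<sigma> j" "g j = g (\<sigma> j)" using \<sigma>[OF j] by auto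
    then have "(THE i. i \<in> S \<and> i \<noteq> \<sigma> j \<and> g i = g (\<sigma> j)) = j"
      using j by (intro the1_equality partner) auto
    then show ?thesis using \<open>\<sigma> j \<in> S\<close> unfolding \<sigma>_def by simp
  qed
  have "\<sigma> \<in> extensional S" unfolding \<sigma>_def by simp
  then have "\<sigma> \<in> pairings S" using \<sigma> \<sigma>\<sigma> unfolding pairings_def by (simp add: PiE_iff)
  then show ?thesis using \<sigma> by blast
qed

definition pair_mins :: "('a::linorder \<Rightarrow> 'a) \<Rightarrow> 'a set \<Rightarrow> 'a set" where
  "pair_mins \<sigma> S = {a \<in> S. a < \<sigma> a}"

lemma pair_mins_partner:
  assumes "\<sigma> \<in> pairings S" "j \<in> S" "j \<notin> pair_mins \<sigma> S"
  shows "\<sigma> j \<in> pair_mins \<sigma> S" "\<sigma> j < j"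
  using pairingsD[OF assms(1,2)] assms(2,3) unfolding pair_mins_def by auto

lemma pairings_split:
  assumes \<sigma>: "\<sigma> \<in> pairings S"
  shows "pair_mins \<sigma> S \<union> \<sigma> ` pair_mins \<sigma> S = S"
    and "pair_mins \<sigma> S \<inter> \<sigma> ` pair_mins \<sigma> S = {}"
    and "inj_on \<sigma> (pair_mins \<sigma> S)"
proof -
  show "pair_mins \<sigma> S \<union> \<sigma> ` pair_mins \<sigma> S = S"
  proof (intro equalityI subsetI)
    fix j assume j: "j \<in> S"
    show "j \<in> pair_mins \<sigma> S \<union> \<sigma> ` pair_mins \<sigma> S"
    proof (cases "j \<in> pair_mins \<sigma> S")
      case False
      then have "\<sigma> j \<in> pair_mins \<sigma> S" "\<sigma> (\<sigma> j) = j"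
        using pair_mins_partner[OF \<sigma> j] pairingsD[OF \<sigma> j] by auto
      then show ?thesis by (metis UnI2 image_eqI)
    qed simp
  qed (auto simp: pair_mins_def intro: pairingsD(1)[OF \<sigma>])
  have "x \<notin> \<sigma> ` pair_mins \<sigma> S" if x: "x \<in> pair_mins \<sigma> S" for x
  proof
    assume "x \<in> \<sigma> ` pair_mins \<sigma> S"
    then obtain a where "a \<in> pair_mins \<sigma> S" "x = \<sigma> a" by blast
    then show False using x pairingsD(3)[OF \<sigma>, of a] unfolding pair_mins_def by auto
  qed
  then show "pair_mins \<sigma> S \<inter> \<sigma> ` pair_mins \<sigma> S = {}" by (simp add: disjoint_iff)
  show "inj_on \<sigma> (pair_mins \<sigma> S)"
  proof (rule inj_onI)
    fix a b assume "a \<in> pair_mins \<sigma> S" "b \<in> pair_mins \<sigma> S" and eq: "\<sigma> a = \<sigma> b"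
    then have "a \<in> S" "b \<in> S" unfolding pair_mins_def by auto
    then show "a = b" using pairingsD(3)[OF \<sigma>] eq by metis
  qed
qed

lemma card_pairings_domain:
  assumes "\<sigma> \<in> pairings S" "finite S"
  shows "card S = 2 * card (pair_mins \<sigma> S)"
proof -
  have "card (pair_mins \<sigma> S \<union> \<sigma> ` pair_mins \<sigma> S) =
      card (pair_mins \<sigma> S) + card (\<sigma> ` pair_mins \<sigma> S)"
    using assms(2) pairings_split(2)[OF assms(1)]
    by (intro card_Un_disjoint) (auto simp: pair_mins_def)
  then show ?thesis
    using pairings_split(1,3)[OF assms(1)] by (simp add: card_image)
qed

lemma sum_pairing:
  assumes "\<sigma> \<in> pairings S" "finite S"
  shows "(\<Sum>j\<in>S. h j) = (\<Sum>a\<in>pair_mins \<sigma> S. h a + h (\<sigma> a))"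
proof -
  have "(\<Sum>j\<in>pair_mins \<sigma> S \<union> \<sigma> ` pair_mins \<sigma> S. h j) =
      (\<Sum>j\<in>pair_mins \<sigma> S. h j) + (\<Sum>j\<in>\<sigma> ` pair_mins \<sigma> S. h j)"
    using assms(2) pairings_split(2)[OF assms(1)]
    by (intro sum.union_disjoint) (auto simp: pair_mins_def)
  also have "(\<Sum>j\<in>\<sigma> ` pair_mins \<sigma> S. h j) = (\<Sum>a\<in>pair_mins \<sigma> S. h (\<sigma> a))"
    using pairings_split(3)[OF assms(1)] by (simp add: sum.reindex)
  finally show ?thesis
    using pairings_split(1)[OF assms(1)] by (simp add: sum.distrib)
qed

section \<open>Steps of walks\<close>

definition step :: "(nat \<Rightarrow> nat) \<Rightarrow> nat \<Rightarrow> int" where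
  "step f j = int (f (Suc j)) - int (f j)"

definition step_length :: "(nat \<Rightarrow> nat) \<Rightarrow> nat \<Rightarrow> nat" where
  "step_length f j = nat \<bar>step f j\<bar>"

lemma step_length_eq_iff:
  "step_length f i = step_length f j \<longleftrightarrow> step f i = step f j \<or> step f i = - step f j"
  unfolding step_length_def by auto

lemma walk_eqI:
  assumes "f \<in> {..m} \<rightarrow>\<^sub>E X" "g \<in> {..m} \<rightarrow>\<^sub>E Y" "f 0 = g 0" "\<And>j. j < m \<Longrightarrow> step f j = step g j"
  shows "f = g"
proof (rule ext)
  fix j
  show "f j = g j"
  proof (cases "j \<le> m")
    case True
    then show ?thesis
    proof (induction j)
      case (Suc j)
      then have "f j = g j" "step f j = step g j" using assms(4) by auto
      then show ?case by (simp add: step_def)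
    qed (use assms(3) in simp)
  qed (use assms(1,2) in \<open>auto simp: PiE_iff extensional_def\<close>)
qed

lemma inj_on_start_steps: "inj_on (\<lambda>f. (f 0, restrict (step f) {..<m})) ({..m} \<rightarrow>\<^sub>E X)"
proof (rule inj_onI)
  fix f g assume "f \<in> {..m} \<rightarrow>\<^sub>E X" "g \<in> {..m} \<rightarrow>\<^sub>E X"
    and eq: "(f 0, restrict (step f) {..<m}) = (g 0, restrict (step g) {..<m})"
  moreover have "step f j = step g j" if "j < m" for j
    using fun_cong[OF arg_cong[OF eq, of snd], of j] that by simp
  ultimately show "f = g" by (intro walk_eqI) auto
qed

lemma abs_step_less: "f \<in> closed_walks N m \<Longrightarrow> j < m \<Longrightarrow> \<bar>step f j\<bar> < int N"
  using closed_walksD[of f N m j] closed_walksD[of f N m "Suc j"] unfolding step_def by auto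

lemma step_length_less: "f \<in> closed_walks N m \<Longrightarrow> j < m \<Longrightarrow> step_length f j < N"
  using abs_step_less unfolding step_length_def by fastforce

lemma sum_steps_closed_walk: "f \<in> closed_walks N m \<Longrightarrow> (\<Sum>j<m. step f j) = 0"
  unfolding step_def closed_walks_def using sum_lessThan_telescope[of "\<lambda>j. int (f j)" m] by simp

lemma card_closed_walks_step_lengths_subset:
  assumes "finite D"
  shows "card {f \<in> closed_walks N m. step_length f ` {..<m} \<subseteq> D} \<le> N * (2 * card D) ^ m"
proof -
  let ?W = "{f \<in> closed_walks N m. step_length f ` {..<m} \<subseteq> D}"
  let ?F = "\<lambda>f. (f 0, restrict (step f) {..<m})"
  define Z where "Z = (\<lambda>(v, s). if s then int v else - int v) ` (D \<times> (UNIV :: bool set))"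
  have fin_Z: "finite Z" unfolding Z_def using assms by simp
  have "card Z \<le> card (D \<times> (UNIV :: bool set))"
    unfolding Z_def using assms by (intro card_image_le) simp
  then have card_Z: "card Z \<le> 2 * card D" by (simp add: card_cartesian_product)
  have "step f j \<in> Z" if "step_length f j \<in> D" for f j
    using that unfolding Z_def step_length_def
    by (intro image_eqI[of _ _ "(nat \<bar>step f j\<bar>, step f j \<ge> 0)"]) auto
  then have "?F ` ?W \<subseteq> {..<N} \<times> ({..<m} \<rightarrow>\<^sub>E Z)"
    by (auto simp: closed_walks_def image_subset_iff)
  moreover have "inj_on ?F ?W"
    by (rule inj_on_subset[OF inj_on_start_steps]) (auto simp: closed_walks_def)
  ultimately have "card ?W \<le> card ({..<N} \<times> ({..<m} \<rightarrow>\<^sub>E Z))"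
    using fin_Z by (intro card_inj_on_le) (auto intro: finite_PiE)
  also have "\<dots> = N * card Z ^ m" by (simp add: card_cartesian_product card_PiE)
  also have "\<dots> \<le> N * (2 * card D) ^ m" using card_Z by (intro mult_le_mono2 power_mono) auto
  finally show ?thesis .
qed

definition few_lengths_walks :: "nat \<Rightarrow> nat \<Rightarrow> nat \<Rightarrow> (nat \<Rightarrow> nat) set" where
  "few_lengths_walks N m r = {f \<in> closed_walks N m. card (step_length f ` {..<m}) < r}"

lemma card_few_lengths_walks:
  assumes N: "N \<ge> 1"
  shows "card (few_lengths_walks N m r) \<le> r * (2 * r) ^ m * N ^ r"
proof -
  define W where "W D = {f \<in> closed_walks N m. step_length f ` {..<m} \<subseteq> D}" for D
  define Ds where "Ds j = {D. D \<subseteq> {..<N} \<and> card D = j}" for j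
  have fin_Ds: "finite (Ds j)" for j
    unfolding Ds_def by (rule finite_subset[of _ "Pow {..<N}"]) auto
  have card_W: "card (W D) \<le> N * (2 * r) ^ m" if "D \<in> Ds j" "j < r" for D j
  proof -
    have "finite D" using that finite_subset[of D "{..<N}"] by (auto simp: Ds_def)
    then have "card (W D) \<le> N * (2 * card D) ^ m"
      unfolding W_def by (rule card_closed_walks_step_lengths_subset)
    also have "\<dots> \<le> N * (2 * r) ^ m"
      using that by (auto simp: Ds_def intro!: mult_le_mono2 power_mono)
    finally show ?thesis .
  qed
  have "{f \<in> closed_walks N m. card (step_length f ` {..<m}) < r} \<subseteq> (\<Union>j<r. \<Union>D\<in>Ds j. W D)"
  proof
    fix f assume f: "f \<in> {f \<in> closed_walks N m. card (step_length f ` {..<m}) < r}"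
    then have "step_length f ` {..<m} \<in> Ds (card (step_length f ` {..<m}))"
      using step_length_less unfolding Ds_def by auto
    then show "f \<in> (\<Union>j<r. \<Union>D\<in>Ds j. W D)" using f unfolding W_def by blast
  qed
  moreover have "finite (\<Union>j<r. \<Union>D\<in>Ds j. W D)"
    by (rule finite_subset[OF _ finite_closed_walks[of N m]]) (auto simp: W_def)
  ultimately have "card {f \<in> closed_walks N m. card (step_length f ` {..<m}) < r} \<le>
      card (\<Union>j<r. \<Union>D\<in>Ds j. W D)"
    by (intro card_mono)
  also have "\<dots> \<le> (\<Sum>j<r. card (\<Union>D\<in>Ds j. W D))" by (rule card_UN_le) simp
  also have "\<dots> \<le> (\<Sum>j<r. \<Sum>D\<in>Ds j. card (W D))" by (intro sum_mono card_UN_le fin_Ds)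
  also have "\<dots> \<le> (\<Sum>j<r. \<Sum>D\<in>Ds j. N * (2 * r) ^ m)" by (intro sum_mono card_W) auto
  also have "\<dots> = (\<Sum>j<r. (N choose j) * N * (2 * r) ^ m)" by (simp add: Ds_def n_subsets mult.assoc)
  also have "\<dots> \<le> (\<Sum>j<r. N ^ r * (2 * r) ^ m)"
  proof (intro sum_mono mult_le_mono1)
    fix j assume "j \<in> {..<r}"
    have "(N choose j) * N \<le> N ^ j * N"
      by (cases "j \<le> N") (auto simp: binomial_eq_0 binomial_le_pow)
    also have "\<dots> \<le> N ^ r"
      using N \<open>j \<in> {..<r}\<close> power_increasing[of "Suc j" r N] by (simp add: mult.commute)
    finally show "(N choose j) * N \<le> N ^ r" .
  qed
  also have "\<dots> = r * (2 * r) ^ m * N ^ r" by simp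
  finally show ?thesis unfolding few_lengths_walks_def .
qed


section \<open>Walks compatible with a pairing of their steps\<close>

definition opposite_walks :: "nat \<Rightarrow> nat \<Rightarrow> (nat \<Rightarrow> nat) \<Rightarrow> (nat \<Rightarrow> nat) set" where
  "opposite_walks N m \<sigma> = {f \<in> closed_walks N m. \<forall>j<m. step f (\<sigma> j) = - step f j}"

definition compatible_walks :: "nat \<Rightarrow> nat \<Rightarrow> (nat \<Rightarrow> nat) \<Rightarrow> (nat \<Rightarrow> nat) set" where
  "compatible_walks N m \<sigma> = {f \<in> closed_walks N m. \<forall>j<m. step_length f (\<sigma> j) = step_length f j}"

lemma opposite_walks_eqI:
  assumes \<sigma>: "\<sigma> \<in> pairings {..<m}"
    and f: "f \<in> opposite_walks N m \<sigma>" and g: "g \<in> opposite_walks N m \<sigma>" and "f 0 = g 0"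
    and firsts: "\<And>a. a \<in> pair_mins \<sigma> {..<m} \<Longrightarrow> f (Suc a) = g (Suc a)"
  shows "f = g"
proof -
  have "f j = g j" if "j \<le> m" for j
    using that
  proof (induction j rule: less_induct)
    case (less j)
    show ?case
    proof (cases j)
      case 0
      then show ?thesis using \<open>f 0 = g 0\<close> by simp
    next
      case (Suc i)
      show ?thesis
      proof (cases "i \<in> pair_mins \<sigma> {..<m}")
        case True
        then show ?thesis using firsts Suc by simp
      next
        case False
        have i: "i < m" using less.prems Suc by simp
        then have a: "\<sigma> i \<in> pair_mins \<sigma> {..<m}" "\<sigma> i < i" "\<sigma> (\<sigma> i) = i"
          using pair_mins_partner[OF \<sigma> _ False] pairingsD(3)[OF \<sigma>] by auto
        then have "\<sigma> i < m" by (simp add: pair_mins_def)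
        then have "step f (\<sigma> (\<sigma> i)) = - step f (\<sigma> i)" "step g (\<sigma> (\<sigma> i)) = - step g (\<sigma> i)"
          using f g unfolding opposite_walks_def by auto
        then have "step f i = - step f (\<sigma> i)" "step g i = - step g (\<sigma> i)"
          using a(3) by simp_all
        moreover have "f (\<sigma> i) = g (\<sigma> i)" "f (Suc (\<sigma> i)) = g (Suc (\<sigma> i))" "f i = g i"
          using less.IH less.prems a(2) Suc by simp_all
        ultimately show ?thesis using Suc by (simp add: step_def)
      qed
    qed
  qed
  then show "f = g"
    using f g unfolding opposite_walks_def closed_walks_def by (auto intro: PiE_ext)
qed

lemma card_opposite_walks:
  assumes \<sigma>: "\<sigma> \<in> pairings {..<2 * k}"
  shows "card (opposite_walks N (2 * k) \<sigma>) \<le> N ^ (k + 1)"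
proof -
  let ?M = "pair_mins \<sigma> {..<2 * k}"
  let ?F = "\<lambda>f. (f 0, restrict (\<lambda>a. f (Suc a)) ?M)"
  have fin_M: "finite ?M" by (simp add: pair_mins_def)
  have "inj_on ?F (opposite_walks N (2 * k) \<sigma>)"
  proof (rule inj_onI)
    fix f g assume "f \<in> opposite_walks N (2 * k) \<sigma>" "g \<in> opposite_walks N (2 * k) \<sigma>"
      and eq: "?F f = ?F g"
    moreover have "f (Suc a) = g (Suc a)" if "a \<in> ?M" for a
      using fun_cong[OF arg_cong[OF eq, of snd], of a] that by simp
    ultimately show "f = g" using eq by (intro opposite_walks_eqI[OF \<sigma>]) auto
  qed
  moreover have "?F ` opposite_walks N (2 * k) \<sigma> \<subseteq> {..<N} \<times> (?M \<rightarrow>\<^sub>E {..<N})"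
  proof (rule image_subsetI)
    fix f assume "f \<in> opposite_walks N (2 * k) \<sigma>"
    then have "f j < N" if "j \<le> 2 * k" for j
      using that closed_walksD unfolding opposite_walks_def by blast
    then show "?F f \<in> {..<N} \<times> (?M \<rightarrow>\<^sub>E {..<N})"
      by (simp add: restrict_PiE_iff pair_mins_def)
  qed
  ultimately have "card (opposite_walks N (2 * k) \<sigma>) \<le> card ({..<N} \<times> (?M \<rightarrow>\<^sub>E {..<N}))"
    using fin_M by (intro card_inj_on_le) (auto intro: finite_PiE)
  also have "\<dots> = N ^ (k + 1)"
    using fin_M card_pairings_domain[OF \<sigma>] by (simp add: card_cartesian_product card_PiE)
  finally show ?thesis .
qed

definition equal_pair_walks :: "nat \<Rightarrow> nat \<Rightarrow> (nat \<Rightarrow> nat) \<Rightarrow> nat \<Rightarrow> (nat \<Rightarrow> nat) set" where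
  "equal_pair_walks N m \<sigma> a = {f \<in> compatible_walks N m \<sigma>. step f (\<sigma> a) = step f a}"

lemma sum_same_steps_eq_0:
  assumes \<sigma>: "\<sigma> \<in> pairings {..<m}" and f: "f \<in> compatible_walks N m \<sigma>"
  shows "(\<Sum>a\<in>pair_mins \<sigma> {..<m}. if step f (\<sigma> a) = step f a then step f a else 0) = 0"
proof -
  have pair: "step f a + step f (\<sigma> a) = 2 * (if step f (\<sigma> a) = step f a then step f a else 0)"
    if "a \<in> pair_mins \<sigma> {..<m}" for a
  proof -
    have "step_length f (\<sigma> a) = step_length f a"
      using f that unfolding compatible_walks_def pair_mins_def by auto
    then show ?thesis unfolding step_length_eq_iff by auto
  qed
  have "(\<Sum>j<m. step f j) = (\<Sum>a\<in>pair_mins \<sigma> {..<m}. step f a + step f (\<sigma> a))"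
    by (rule sum_pairing[OF \<sigma> finite_lessThan])
  also have "\<dots> = 2 * (\<Sum>a\<in>pair_mins \<sigma> {..<m}. if step f (\<sigma> a) = step f a then step f a else 0)"
    unfolding sum_distrib_left by (rule sum.cong[OF refl pair])
  finally show ?thesis
    using sum_steps_closed_walk[of f N m] f unfolding compatible_walks_def by simp
qed

lemma equal_pair_walks_eqI:
  assumes \<sigma>: "\<sigma> \<in> pairings {..<m}" and a: "a \<in> pair_mins \<sigma> {..<m}"
    and f: "f \<in> equal_pair_walks N m \<sigma> a" and g: "g \<in> equal_pair_walks N m \<sigma> a" and "f 0 = g 0"
    and steps: "\<And>b. b \<in> pair_mins \<sigma> {..<m} - {a} \<Longrightarrow> step f b = step g b"
    and signs: "\<And>b. b \<in> pair_mins \<sigma> {..<m} \<Longrightarrow>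
      (step f (\<sigma> b) = step f b) = (step g (\<sigma> b) = step g b)"
  shows "f = g"
proof -
  let ?M = "pair_mins \<sigma> {..<m}"
  let ?same = "\<lambda>f b. if step f (\<sigma> b) = step f b then step f b else 0"
  have M_less: "b < m" "\<sigma> b < m" if "b \<in> ?M" for b
    using that pairingsD(1)[OF \<sigma>] unfolding pair_mins_def by auto
  have rest: "(\<Sum>b\<in>?M - {a}. ?same f b) = (\<Sum>b\<in>?M - {a}. ?same g b)"
  proof (rule sum.cong[OF refl])
    fix b assume b: "b \<in> ?M - {a}"
    show "?same f b = ?same g b"
      by (rule if_cong[OF signs]) (use b steps[OF b] in auto)
  qed
  \<comment> \<open>The steps of a closed walk sum to zero, which pins down the step at \<open>a\<close>.\<close>
  have pinned: "step h a + (\<Sum>b\<in>?M - {a}. ?same h b) = 0"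
    if "h \<in> equal_pair_walks N m \<sigma> a" for h
    using sum_same_steps_eq_0[OF \<sigma>, of h N] that a unfolding equal_pair_walks_def
    by (simp add: sum.remove pair_mins_def)
  have "step f a = step g a" using pinned[OF f] pinned[OF g] rest by linarith
  then have on_M: "step f b = step g b" if "b \<in> ?M" for b
    using steps that by (cases "b = a") auto
  have "step f (\<sigma> b) = step g (\<sigma> b)" if "b \<in> ?M" for b
  proof -
    have "step_length f (\<sigma> b) = step_length f b" "step_length g (\<sigma> b) = step_length g b"
      using f g M_less[OF that] unfolding equal_pair_walks_def compatible_walks_def by auto
    then show ?thesis
      using signs[OF that] on_M[OF that] unfolding step_length_eq_iff by auto
  qed
  then have "step f j = step g j" if "j < m" for j
    using on_M pairings_split(1)[OF \<sigma>] that by blast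
  then show "f = g"
    using f g \<open>f 0 = g 0\<close> unfolding equal_pair_walks_def compatible_walks_def closed_walks_def
    by (intro walk_eqI[of f m "{..<N}" g "{..<N}"]) auto
qed

lemma card_equal_pair_walks:
  assumes \<sigma>: "\<sigma> \<in> pairings {..<2 * k}" and a: "a \<in> pair_mins \<sigma> {..<2 * k}"
  shows "card (equal_pair_walks N (2 * k) \<sigma> a) \<le> (4 * N) ^ k"
proof -
  let ?M = "pair_mins \<sigma> {..<2 * k}"
  let ?W = "equal_pair_walks N (2 * k) \<sigma> a"
  let ?I = "{- int N<..<int N}"
  let ?F = "\<lambda>f. (f 0, restrict (step f) (?M - {a}), restrict (\<lambda>b. step f (\<sigma> b) = step f b) ?M)"
  have card_M: "card ?M = k" using card_pairings_domain[OF \<sigma>] by simp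
  have fin_M: "finite ?M" by (simp add: pair_mins_def)
  have "inj_on ?F ?W"
  proof (rule inj_onI)
    fix f g assume "f \<in> ?W" "g \<in> ?W" and eq: "?F f = ?F g"
    moreover have "step f b = step g b" if "b \<in> ?M - {a}" for b
      using fun_cong[OF arg_cong[OF eq, of "fst \<circ> snd"], of b] that by simp
    moreover have "(step f (\<sigma> b) = step f b) = (step g (\<sigma> b) = step g b)" if "b \<in> ?M" for b
      using fun_cong[OF arg_cong[OF eq, of "snd \<circ> snd"], of b] that by simp
    ultimately show "f = g" using eq by (intro equal_pair_walks_eqI[OF \<sigma> a]) auto
  qed
  moreover have "?F ` ?W \<subseteq> {..<N} \<times> ((?M - {a}) \<rightarrow>\<^sub>E ?I) \<times> (?M \<rightarrow>\<^sub>E (UNIV :: bool set))"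
  proof (rule image_subsetI)
    fix f assume "f \<in> ?W"
    then have f: "f \<in> closed_walks N (2 * k)"
      by (simp add: equal_pair_walks_def compatible_walks_def)
    have "step f b \<in> ?I" if "b \<in> ?M" for b
    proof -
      have "b < 2 * k" using that by (simp add: pair_mins_def)
      then show ?thesis using abs_step_less[OF f] by fastforce
    qed
    then show "?F f \<in> {..<N} \<times> ((?M - {a}) \<rightarrow>\<^sub>E ?I) \<times> (?M \<rightarrow>\<^sub>E (UNIV :: bool set))"
      using closed_walksD[OF f, of 0] by (simp add: restrict_PiE_iff)
  qed
  ultimately have "card ?W \<le> card ({..<N} \<times> ((?M - {a}) \<rightarrow>\<^sub>E ?I) \<times> (?M \<rightarrow>\<^sub>E (UNIV :: bool set)))"
    using fin_M by (intro card_inj_on_le) (simp_all add: finite_PiE)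
  also have "\<dots> = N * (2 * N - 1) ^ (k - 1) * 2 ^ k"
  proof -
    have "nat (2 * int N - 1) = 2 * N - 1" by linarith
    then show ?thesis using fin_M card_M a by (simp add: card_cartesian_product card_PiE)
  qed
  also have "\<dots> \<le> (4 * N) ^ k"
  proof -
    obtain k' where k: "k = Suc k'" using a card_M fin_M by (cases k) auto
    have "N * (2 * N - 1) ^ k' \<le> 2 * N * (2 * N) ^ k'" by (intro mult_le_mono power_mono) auto
    then have "N * (2 * N - 1) ^ k' * 2 ^ Suc k' \<le> (2 * N) ^ Suc k' * 2 ^ Suc k'"
      by (intro mult_le_mono1) simp
    also have "\<dots> = (2 * N * 2) ^ Suc k'" by (simp only: power_mult_distrib)
    finally show ?thesis using k by (simp add: mult.commute)
  qed
  finally show ?thesis .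
qed

lemma compatible_walks_subset:
  assumes \<sigma>: "\<sigma> \<in> pairings {..<m}"
  shows "compatible_walks N m \<sigma> \<subseteq>
    opposite_walks N m \<sigma> \<union> (\<Union>a\<in>pair_mins \<sigma> {..<m}. equal_pair_walks N m \<sigma> a)"
proof
  fix f assume f: "f \<in> compatible_walks N m \<sigma>"
  show "f \<in> opposite_walks N m \<sigma> \<union> (\<Union>a\<in>pair_mins \<sigma> {..<m}. equal_pair_walks N m \<sigma> a)"
  proof (cases "\<forall>j<m. step f (\<sigma> j) = - step f j")
    case True
    then show ?thesis using f unfolding compatible_walks_def opposite_walks_def by simp
  next
    case False
    then obtain j where j: "j < m" "step f (\<sigma> j) \<noteq> - step f j" by auto
    then have same: "step f (\<sigma> j) = step f j"
      using f unfolding compatible_walks_def step_length_eq_iff by auto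
    show ?thesis
    proof (cases "j \<in> pair_mins \<sigma> {..<m}")
      case True
      then show ?thesis using f same unfolding equal_pair_walks_def by blast
    next
      case False
      then have "\<sigma> j \<in> pair_mins \<sigma> {..<m}" "\<sigma> (\<sigma> j) = j"
        using pair_mins_partner[OF \<sigma> _ False] pairingsD(3)[OF \<sigma>] j(1) by auto
      then show ?thesis
        using f same unfolding equal_pair_walks_def by (intro UnI2 UN_I[of "\<sigma> j"]) auto
    qed
  qed
qed

lemma card_compatible_walks:
  assumes \<sigma>: "\<sigma> \<in> pairings {..<2 * k}"
  shows "card (compatible_walks N (2 * k) \<sigma>) \<le> N ^ (k + 1) + k * (4 * N) ^ k"
proof -
  let ?M = "pair_mins \<sigma> {..<2 * k}"
  let ?U = "opposite_walks N (2 * k) \<sigma> \<union> (\<Union>a\<in>?M. equal_pair_walks N (2 * k) \<sigma> a)"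
  have "finite ?U"
    by (rule finite_subset[OF _ finite_closed_walks[of N "2 * k"]])
      (auto simp: opposite_walks_def equal_pair_walks_def compatible_walks_def)
  then have "card (compatible_walks N (2 * k) \<sigma>) \<le> card ?U"
    using compatible_walks_subset[OF \<sigma>] by (rule card_mono)
  also have "\<dots> \<le> card (opposite_walks N (2 * k) \<sigma>) + (\<Sum>a\<in>?M. card (equal_pair_walks N (2 * k) \<sigma> a))"
    by (intro order.trans[OF card_Un_le] add_left_mono card_UN_le) (simp add: pair_mins_def)
  also have "\<dots> \<le> N ^ (k + 1) + (\<Sum>a\<in>?M. (4 * N) ^ k)"
    by (intro add_mono sum_mono card_opposite_walks[OF \<sigma>] card_equal_pair_walks[OF \<sigma>])
  also have "\<dots> = N ^ (k + 1) + k * (4 * N) ^ k"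
    using card_pairings_domain[OF \<sigma>] by simp
  finally show ?thesis .
qed

definition step_length_count :: "(nat \<Rightarrow> nat) \<Rightarrow> nat \<Rightarrow> nat \<Rightarrow> nat" where
  "step_length_count f m v = card {j. j < m \<and> step_length f j = v}"

definition paired_walks :: "nat \<Rightarrow> nat \<Rightarrow> (nat \<Rightarrow> nat) set" where
  "paired_walks N m = {f \<in> closed_walks N m. \<forall>j<m. step_length_count f m (step_length f j) = 2}"

lemma card_paired_walks:
  "card (paired_walks N (2 * k)) \<le> odd_double_fact k * (N ^ (k + 1) + k * (4 * N) ^ k)"
proof -
  let ?P = "pairings {..<2 * k}"
  have fin_P: "finite ?P" by (simp add: finite_pairings)
  have "paired_walks N (2 * k) \<subseteq> (\<Union>\<sigma>\<in>?P. compatible_walks N (2 * k) \<sigma>)"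
  proof
    fix f assume f: "f \<in> paired_walks N (2 * k)"
    then have "card {i \<in> {..<2 * k}. step_length f i = step_length f j} = 2"
      if "j \<in> {..<2 * k}" for j
      using that unfolding paired_walks_def step_length_count_def by auto
    then obtain \<sigma> where "\<sigma> \<in> ?P" "\<forall>j\<in>{..<2 * k}. step_length f (\<sigma> j) = step_length f j"
      using pairing_exists_if_values_doubled by blast
    then show "f \<in> (\<Union>\<sigma>\<in>?P. compatible_walks N (2 * k) \<sigma>)"
      using f unfolding paired_walks_def compatible_walks_def by auto
  qed
  moreover have "finite (\<Union>\<sigma>\<in>?P. compatible_walks N (2 * k) \<sigma>)"
    using fin_P finite_closed_walks by (auto simp: compatible_walks_def)
  ultimately have "card (paired_walks N (2 * k)) \<le>
      card (\<Union>\<sigma>\<in>?P. compatible_walks N (2 * k) \<sigma>)"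
    by (rule card_mono[rotated])
  also have "\<dots> \<le> (\<Sum>\<sigma>\<in>?P. card (compatible_walks N (2 * k) \<sigma>))"
    by (rule card_UN_le[OF fin_P])
  also have "\<dots> \<le> (\<Sum>\<sigma>\<in>?P. N ^ (k + 1) + k * (4 * N) ^ k)"
    by (intro sum_mono card_compatible_walks)
  also have "\<dots> \<le> odd_double_fact k * (N ^ (k + 1) + k * (4 * N) ^ k)"
    using card_pairings_le[of "{..<2 * k}" k] by simp
  finally show ?thesis .
qed

lemma card_image_lt_if_fibres_ge_2:
  assumes fin: "finite A" and ge2: "\<And>x. x \<in> A \<Longrightarrow> 2 \<le> card {y \<in> A. g y = g x}"
    and x0: "x0 \<in> A" "card {y \<in> A. g y = g x0} \<noteq> 2"
  shows "2 * card (g ` A) < card A"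
proof -
  let ?c = "\<lambda>v. card {y \<in> A. g y = v}"
  have ge2': "2 \<le> ?c v" if "v \<in> g ` A" for v using ge2 that by blast
  have "card A = (\<Sum>v\<in>g ` A. ?c v)"
    using sum.group[of A "g ` A" g "\<lambda>_. 1 :: nat"] fin by simp
  also have "\<dots> = ?c (g x0) + (\<Sum>v\<in>g ` A - {g x0}. ?c v)"
    by (rule sum.remove) (use fin x0(1) in auto)
  also have "\<dots> \<ge> 3 + (\<Sum>v\<in>g ` A - {g x0}. 2)"
    using ge2[OF x0(1)] x0(2) ge2' by (intro add_mono sum_mono) auto
  finally have "card A \<ge> 3 + 2 * (card (g ` A) - 1)"
    using fin x0(1) by simp
  moreover have "card (g ` A) \<ge> 1" using fin x0(1) by (auto simp: Suc_le_eq card_gt_0_iff)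
  ultimately show ?thesis by linarith
qed

section \<open>Expected contribution of a walk\<close>

abbreviation law :: "(real \<Rightarrow> real) \<Rightarrow> real measure" where
  "law p \<equiv> density lborel (\<lambda>x. ennreal (p x))"

definition moment :: "(real \<Rightarrow> real) \<Rightarrow> nat \<Rightarrow> real" where
  "moment p c = (\<integral>x. x ^ c \<partial>law p)"

definition abs_moment :: "(real \<Rightarrow> real) \<Rightarrow> nat \<Rightarrow> real" where
  "abs_moment p c = (\<integral>x. \<bar>x\<bar> ^ c \<partial>law p)"

lemma good_densityD:
  assumes "good_density p"
  shows "p \<in> borel_measurable lborel" "AE x in lborel. 0 \<le> p x"
  using assms unfolding good_density_def by auto

lemma prob_space_law:
  assumes "good_density p"
  shows "prob_space (law p)"
proof (rule prob_spaceI)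
  have "emeasure (law p) (space (law p)) = (\<integral>\<^sup>+ x. ennreal (p x) \<partial>lborel)"
    using good_densityD[OF assms] by (simp add: emeasure_density)
  also have "\<dots> = ennreal (LINT x|lborel. p x)"
    using assms unfolding good_density_def by (intro nn_integral_eq_integral) auto
  finally show "emeasure (law p) (space (law p)) = 1"
    using assms unfolding good_density_def by simp
qed

lemma moment_eq_lborel:
  assumes "good_density p"
  shows "moment p c = (LINT x|lborel. x ^ c * p x)"
  unfolding moment_def using good_densityD[OF assms]
  by (subst integral_density) (auto simp: mult.commute)

lemma integrable_law_power:
  assumes "good_density p"
  shows "integrable (law p) (\<lambda>x. x ^ c)"
proof -
  have "integrable lborel (\<lambda>x. p x *\<^sub>R \<bar>x\<bar> ^ c)"
    using assms unfolding good_density_def by (simp add: mult.commute)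
  then have "integrable (law p) (\<lambda>x. \<bar>x\<bar> ^ c)"
    using good_densityD[OF assms] by (subst integrable_density) auto
  then show ?thesis by (simp add: integrable_abs_iff flip: power_abs)
qed

lemma moment_0_1_2:
  assumes "good_density p"
  shows "moment p 0 = 1" "moment p 1 = 0" "moment p 2 = 1"
  using assms unfolding moment_eq_lborel[OF assms] good_density_def by auto

lemma abs_moment_le: "\<bar>moment p c\<bar> \<le> abs_moment p c"
  unfolding moment_def abs_moment_def
  using integral_abs_bound[of _ "\<lambda>x. x ^ c"] by (simp add: power_abs)

definition toeplitz_coeff :: "(nat \<Rightarrow> real) \<Rightarrow> nat \<Rightarrow> real" where
  "toeplitz_coeff b d = (if d = 0 then 0 else b d)"

lemma trace_toeplitz_pow:
  "mat_trace (toeplitz_mat N b ^\<^sub>m m) =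
    (\<Sum>f\<in>closed_walks N m. \<Prod>j<m. toeplitz_coeff b (step_length f j))"
proof -
  have A: "toeplitz_mat N b \<in> carrier_mat N N" unfolding toeplitz_mat_def by auto
  have "toeplitz_mat N b $$ (f j, f (Suc j)) = toeplitz_coeff b (step_length f j)"
    if "f \<in> closed_walks N m" "j < m" for f j
    using closed_walksD[OF that(1), of j] closed_walksD[OF that(1), of "Suc j"] that(2)
    by (simp add: toeplitz_mat_def toeplitz_coeff_def step_length_def step_def abs_minus_commute)
  then show ?thesis
    unfolding mat_trace_def using trace_mat_pow_eq_sum_closed_walks[OF A, of m] A by simp
qed

definition walk_weight :: "(real \<Rightarrow> real) \<Rightarrow> nat \<Rightarrow> nat \<Rightarrow> (nat \<Rightarrow> nat) \<Rightarrow> real" where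
  "walk_weight p N m f =
     (if \<forall>j<m. step_length f j \<noteq> 0 then \<Prod>v\<in>{1..<N}. moment p (step_length_count f m v) else 0)"

lemma walk_weight_zero_step: "j < m \<Longrightarrow> step_length f j = 0 \<Longrightarrow> walk_weight p N m f = 0"
  unfolding walk_weight_def by (rule if_not_P) blast

lemma prod_eq_prod_power_card:
  fixes h :: "'b \<Rightarrow> 'c::comm_monoid_mult"
  assumes "finite J" "finite V" "g ` J \<subseteq> V"
  shows "(\<Prod>j\<in>J. h (g j)) = (\<Prod>v\<in>V. h v ^ card {j \<in> J. g j = v})"
proof -
  have "(\<Prod>j\<in>J. h (g j)) = (\<Prod>v\<in>V. \<Prod>j\<in>{j \<in> J. g j = v}. h (g j))"
    by (rule prod.group[symmetric]) (use assms in auto)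
  also have "\<dots> = (\<Prod>v\<in>V. h v ^ card {j \<in> J. g j = v})"
  proof (rule prod.cong[OF refl])
    fix v
    have "(\<Prod>j\<in>{j \<in> J. g j = v}. h (g j)) = (\<Prod>j\<in>{j \<in> J. g j = v}. h v)"
      by (rule prod.cong) auto
    then show "(\<Prod>j\<in>{j \<in> J. g j = v}. h (g j)) = h v ^ card {j \<in> J. g j = v}" by simp
  qed
  finally show ?thesis .
qed

lemma prod_toeplitz_coeff_eq:
  assumes f: "f \<in> closed_walks N m" and nonzero: "\<forall>j<m. step_length f j \<noteq> 0"
  shows "(\<Prod>j<m. toeplitz_coeff b (step_length f j)) = (\<Prod>v\<in>{1..<N}. b v ^ step_length_count f m v)"
proof -
  have "step_length f ` {..<m} \<subseteq> {1..<N}"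
    using nonzero step_length_less[OF f] by (auto simp: Suc_le_eq)
  then have "(\<Prod>j<m. b (step_length f j)) = (\<Prod>v\<in>{1..<N}. b v ^ step_length_count f m v)"
    using prod_eq_prod_power_card[of "{..<m}" "{1..<N}" "step_length f" b]
    by (simp add: step_length_count_def)
  moreover have "(\<Prod>j<m. toeplitz_coeff b (step_length f j)) = (\<Prod>j<m. b (step_length f j))"
    using nonzero by (intro prod.cong) (auto simp: toeplitz_coeff_def)
  ultimately show ?thesis by simp
qed

lemma expectation_walk_product:
  assumes p: "good_density p" and f: "f \<in> closed_walks N m"
  shows "integrable (toeplitz_space p N) (\<lambda>b. \<Prod>j<m. toeplitz_coeff b (step_length f j))"
    and "(\<integral>b. (\<Prod>j<m. toeplitz_coeff b (step_length f j)) \<partial>toeplitz_space p N) = walk_weight p N m f"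
proof -
  let ?X = "\<lambda>b. \<Prod>j<m. toeplitz_coeff b (step_length f j)"
  interpret product_sigma_finite "\<lambda>_::nat. law p"
    unfolding product_sigma_finite_def
    using prob_space_imp_sigma_finite[OF prob_space_law[OF p]] by simp
  have "integrable (toeplitz_space p N) ?X \<and> (\<integral>b. ?X b \<partial>toeplitz_space p N) = walk_weight p N m f"
  proof (cases "\<forall>j<m. step_length f j \<noteq> 0")
    case False
    then obtain j0 where "j0 < m" "step_length f j0 = 0" by auto
    then have "?X = (\<lambda>b. 0)" and "walk_weight p N m f = 0"
      by (auto intro!: ext prod_zero bexI[of _ j0] walk_weight_zero_step simp: toeplitz_coeff_def)
    then show ?thesis by simp
  next
    case True
    then have "?X = (\<lambda>b. \<Prod>v\<in>{1..<N}. b v ^ step_length_count f m v)"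
      using prod_toeplitz_coeff_eq[OF f] by auto
    moreover have "integrable (toeplitz_space p N) (\<lambda>b. \<Prod>v\<in>{1..<N}. b v ^ step_length_count f m v)"
      unfolding toeplitz_space_def
      by (intro product_integrable_prod integrable_law_power[OF p]) auto
    moreover have "(\<integral>b. (\<Prod>v\<in>{1..<N}. b v ^ step_length_count f m v) \<partial>toeplitz_space p N) =
        walk_weight p N m f"
      unfolding toeplitz_space_def walk_weight_def moment_def using True
      by (subst product_integral_prod) (auto intro: integrable_law_power[OF p])
    ultimately show ?thesis by simp
  qed
  then show "integrable (toeplitz_space p N) ?X"
    and "(\<integral>b. ?X b \<partial>toeplitz_space p N) = walk_weight p N m f"
    by auto
qed

lemma Mk_even_eq_sum_walk_weight:
  assumes "good_density p"
  shows "Mk p (2 * k) N =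
    (\<Sum>f\<in>closed_walks N (2 * k). walk_weight p N (2 * k) f) / real N ^ (k + 1)"
proof -
  let ?X = "\<lambda>b f. \<Prod>j<2 * k. toeplitz_coeff b (step_length f j)"
  have "- (real (2 * k) / 2 + 1) = - real (k + 1)" by simp
  then have "Mk p (2 * k) N = real N powr (- real (k + 1)) *
      (\<integral>b. (\<Sum>f\<in>closed_walks N (2 * k). ?X b f) \<partial>toeplitz_space p N)"
    unfolding Mk_def Mk_AN_def trace_toeplitz_pow by (simp only: integral_mult_right_zero)
  also have "(\<integral>b. (\<Sum>f\<in>closed_walks N (2 * k). ?X b f) \<partial>toeplitz_space p N) =
      (\<Sum>f\<in>closed_walks N (2 * k). walk_weight p N (2 * k) f)"
    using expectation_walk_product[OF assms] by (simp add: Bochner_Integration.integral_sum)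
  also have "real N powr (- real (k + 1)) = 1 / real N ^ (k + 1)"
  proof (cases "N = 0")
    case False
    then have "real N powr real (k + 1) = real N ^ (k + 1)" by (intro powr_realpow) simp
    then show ?thesis by (simp only: powr_minus_divide)
  qed simp
  finally show ?thesis by simp
qed

section \<open>Bounding the weights\<close>

definition moment_bound :: "(real \<Rightarrow> real) \<Rightarrow> nat \<Rightarrow> real" where
  "moment_bound p m = 1 + (\<Sum>c\<le>m. abs_moment p c)"

lemma abs_moment_nonneg: "0 \<le> abs_moment p c"
  unfolding abs_moment_def by (rule Bochner_Integration.integral_nonneg) simp

lemma one_le_moment_bound: "1 \<le> moment_bound p m"
  unfolding moment_bound_def using abs_moment_nonneg by (simp add: sum_nonneg)

lemma abs_moment_le_moment_bound: "c \<le> m \<Longrightarrow> abs_moment p c \<le> moment_bound p m"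
  unfolding moment_bound_def
  using member_le_sum[of c "{..m}" "abs_moment p"] abs_moment_nonneg by simp

lemma step_length_count_eq_0_iff:
  "step_length_count f m v = 0 \<longleftrightarrow> v \<notin> step_length f ` {..<m}"
  unfolding step_length_count_def by auto

lemma step_length_count_le: "step_length_count f m v \<le> m"
  unfolding step_length_count_def
  using card_mono[of "{..<m}" "{j. j < m \<and> step_length f j = v}"] by auto

lemma abs_walk_weight_le:
  assumes "good_density p"
  shows "\<bar>walk_weight p N m f\<bar> \<le> moment_bound p m ^ m"
proof (cases "\<forall>j<m. step_length f j \<noteq> 0")
  case True
  let ?L = "step_length f ` {..<m}"
  let ?B = "moment_bound p m"
  have "\<bar>moment p (step_length_count f m v)\<bar> \<le> (if v \<in> ?L then ?B else 1)" for v
  proof (cases "v \<in> ?L")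
    case True
    then show ?thesis
      using order_trans[OF abs_moment_le abs_moment_le_moment_bound[OF step_length_count_le]]
      by simp
  next
    case False
    moreover from False have "step_length_count f m v = 0" by (simp add: step_length_count_eq_0_iff)
    ultimately show ?thesis using moment_0_1_2(1)[OF assms] by simp
  qed
  then have "(\<Prod>v\<in>{1..<N}. \<bar>moment p (step_length_count f m v)\<bar>) \<le>
      (\<Prod>v\<in>{1..<N}. if v \<in> ?L then ?B else 1)"
    by (intro prod_mono) simp
  then have "\<bar>walk_weight p N m f\<bar> \<le> (\<Prod>v\<in>{1..<N}. if v \<in> ?L then ?B else 1)"
    using True unfolding walk_weight_def by (simp add: abs_prod)
  also have "\<dots> = ?B ^ card ({1..<N} \<inter> ?L)"
    by (simp add: prod.If_cases Int_def)
  also have "\<dots> \<le> ?B ^ m"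
  proof (rule power_increasing[OF _ one_le_moment_bound])
    have "card ({1..<N} \<inter> ?L) \<le> card ?L" by (rule card_mono) auto
    also have "\<dots> \<le> m" using card_image_le[of "{..<m}" "step_length f"] by simp
    finally show "card ({1..<N} \<inter> ?L) \<le> m" .
  qed
  finally show ?thesis .
next
  case False
  then show ?thesis
    using one_le_moment_bound[of p m] walk_weight_zero_step[of _ m f p N] by fastforce
qed

lemma walk_weight_le_1_if_paired:
  assumes "good_density p" "f \<in> paired_walks N m"
  shows "walk_weight p N m f \<le> 1"
proof -
  have "moment p (step_length_count f m v) = 1" for v
  proof (cases "step_length_count f m v = 0")
    case False
    then obtain j where "j < m" "v = step_length f j" by (auto simp: step_length_count_eq_0_iff)
    then have "step_length_count f m v = 2" using assms(2) unfolding paired_walks_def by simp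
    then show ?thesis using moment_0_1_2(3)[OF assms(1)] by simp
  qed (use moment_0_1_2(1)[OF assms(1)] in simp)
  then show ?thesis unfolding walk_weight_def by simp
qed

lemma walk_weight_eq_0_if_unique_step_length:
  assumes "good_density p" "f \<in> closed_walks N m" "j < m"
    and "step_length_count f m (step_length f j) = 1"
  shows "walk_weight p N m f = 0"
proof (cases "\<forall>j<m. step_length f j \<noteq> 0")
  case True
  then have "step_length f j \<in> {1..<N}"
    using assms(3) step_length_less[OF assms(2,3)] by (simp add: Suc_le_eq)
  then show ?thesis
    using True assms(4) moment_0_1_2(2)[OF assms(1)] unfolding walk_weight_def
    by (intro if_P[THEN trans] prod_zero bexI[of _ "step_length f j"]) auto
qed (use walk_weight_zero_step in blast)

lemma walk_weight_le:
  assumes p: "good_density p" and f: "f \<in> closed_walks N (2 * k)"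
  shows "walk_weight p N (2 * k) f \<le> of_bool (f \<in> paired_walks N (2 * k)) +
    of_bool (card (step_length f ` {..<2 * k}) < k) * moment_bound p (2 * k) ^ (2 * k)"
    (is "_ \<le> ?paired + ?few * ?B")
proof -
  have rhs: "0 \<le> ?few * ?B" "0 \<le> ?paired" using one_le_moment_bound[of p] by simp_all
  consider "f \<in> paired_walks N (2 * k)"
    | j where "j < 2 * k" "step_length_count f (2 * k) (step_length f j) = 1"
    | "f \<notin> paired_walks N (2 * k)"
      "\<forall>j<2 * k. step_length_count f (2 * k) (step_length f j) \<noteq> 1"
    by blast
  then show ?thesis
  proof cases
    case 1
    then have "?paired = 1" by simp
    then show ?thesis using walk_weight_le_1_if_paired[OF p 1] rhs by linarith
  next
    case 2
    then show ?thesis using walk_weight_eq_0_if_unique_step_length[OF p f] rhs by fastforce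
  next
    case 3
    have count: "step_length_count f (2 * k) v = card {i \<in> {..<2 * k}. step_length f i = v}"
      for v
      unfolding step_length_count_def by simp
    have "step_length_count f (2 * k) (step_length f j) \<noteq> 0" if "j < 2 * k" for j
      using that by (auto simp: step_length_count_eq_0_iff)
    then have "2 \<le> step_length_count f (2 * k) (step_length f j)" if "j < 2 * k" for j
      using 3(2) that by (metis One_nat_def less_2_cases not_le)
    moreover obtain j0 where "j0 < 2 * k" "step_length_count f (2 * k) (step_length f j0) \<noteq> 2"
      using 3(1) f unfolding paired_walks_def by auto
    ultimately have "2 * card (step_length f ` {..<2 * k}) < card {..<2 * k}"
      unfolding count by (intro card_image_lt_if_fibres_ge_2) auto
    then have "?few = 1" by simp
    moreover have "walk_weight p N (2 * k) f \<le> ?B"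
      using abs_le_D1[OF abs_walk_weight_le[OF p]] .
    ultimately show ?thesis using rhs(2) by simp
  qed
qed

lemma sum_walk_weight_le:
  assumes "good_density p"
  shows "(\<Sum>f\<in>closed_walks N (2 * k). walk_weight p N (2 * k) f) \<le>
    real (card (paired_walks N (2 * k))) +
    real (card (few_lengths_walks N (2 * k) k)) * moment_bound p (2 * k) ^ (2 * k)"
proof -
  let ?W = "closed_walks N (2 * k)"
  have "paired_walks N (2 * k) \<subseteq> ?W" by (auto simp: paired_walks_def)
  then have paired:
    "(\<Sum>f\<in>?W. of_bool (f \<in> paired_walks N (2 * k)) :: real) = real (card (paired_walks N (2 * k)))"
    by (simp add: finite_closed_walks Int_absorb1)
  have few: "(\<Sum>f\<in>?W. of_bool (card (step_length f ` {..<2 * k}) < k) :: real) =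
      real (card {f \<in> ?W. card (step_length f ` {..<2 * k}) < k})"
    by (simp add: finite_closed_walks Int_def)
  have "(\<Sum>f\<in>?W. walk_weight p N (2 * k) f) \<le>
      (\<Sum>f\<in>?W. of_bool (f \<in> paired_walks N (2 * k)) +
        of_bool (card (step_length f ` {..<2 * k}) < k) * moment_bound p (2 * k) ^ (2 * k))"
    by (rule sum_mono) (rule walk_weight_le[OF assms])
  also have "\<dots> = (\<Sum>f\<in>?W. of_bool (f \<in> paired_walks N (2 * k))) +
      (\<Sum>f\<in>?W. of_bool (card (step_length f ` {..<2 * k}) < k)) *
        moment_bound p (2 * k) ^ (2 * k)"
    by (simp only: sum.distrib sum_distrib_right)
  finally show ?thesis unfolding paired few few_lengths_walks_def .
qed

lemma sum_walk_weight_bound: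
  assumes "good_density p"
  obtains C where "\<And>N. 1 \<le> N \<Longrightarrow> (\<Sum>f\<in>closed_walks N (2 * k). walk_weight p N (2 * k) f) \<le>
    real (odd_double_fact k) * real N ^ (k + 1) + C * real N ^ k"
proof
  let ?B = "moment_bound p (2 * k) ^ (2 * k)"
  fix N :: nat assume N: "1 \<le> N"
  have "card (paired_walks N (2 * k)) \<le>
      odd_double_fact k * N ^ (k + 1) + odd_double_fact k * k * 4 ^ k * N ^ k"
    using card_paired_walks[of N k] by (simp add: power_mult_distrib algebra_simps)
  then have paired: "real (card (paired_walks N (2 * k))) \<le>
      real (odd_double_fact k) * real N ^ (k + 1) +
      real (odd_double_fact k * k * 4 ^ k) * real N ^ k"
    using of_nat_mono by fastforce
  have "real (card (few_lengths_walks N (2 * k) k)) \<le> real (k * (2 * k) ^ (2 * k)) * real N ^ k"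
    using of_nat_mono[OF card_few_lengths_walks[OF N, of "2 * k" k]] by simp
  then have few: "real (card (few_lengths_walks N (2 * k) k)) * ?B \<le>
      real (k * (2 * k) ^ (2 * k)) * ?B * real N ^ k"
    using one_le_moment_bound[of p "2 * k"]
    by (simp add: mult_right_mono mult.commute mult.left_commute)
  show "(\<Sum>f\<in>closed_walks N (2 * k). walk_weight p N (2 * k) f) \<le>
      real (odd_double_fact k) * real N ^ (k + 1) +
      (real (odd_double_fact k * k * 4 ^ k) + real (k * (2 * k) ^ (2 * k)) * ?B) * real N ^ k"
    using sum_walk_weight_le[OF assms, of N k] paired few by (simp add: algebra_simps)
qed

theorem mainTheorem3:
  fixes p :: "real \<Rightarrow> real" and k :: nat
  assumes "good_density p" and "k \<ge> 1"
  shows "\<exists>C::real. \<forall>N::nat. N \<ge> 1 \<longrightarrow>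
           Mk p (2 * k) N \<le> real (odd_double_fact k) + C / real N"
proof -
  obtain C where C: "\<And>N. 1 \<le> N \<Longrightarrow> (\<Sum>f\<in>closed_walks N (2 * k). walk_weight p N (2 * k) f)
      \<le> real (odd_double_fact k) * real N ^ (k + 1) + C * real N ^ k"
    using sum_walk_weight_bound[OF assms(1)] by blast
  have "Mk p (2 * k) N \<le> real (odd_double_fact k) + C / real N" if N: "N \<ge> 1" for N
  proof -
    have "Mk p (2 * k) N \<le>
        (real (odd_double_fact k) * real N ^ (k + 1) + C * real N ^ k) / real N ^ (k + 1)"
      unfolding Mk_even_eq_sum_walk_weight[OF assms(1)]
      using C[OF N] by (simp add: divide_right_mono)
    also have "\<dots> = real (odd_double_fact k) + C / real N"
      using N by (simp add: field_simps)
    finally show ?thesis .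
  qed
  then show ?thesis by blast
qed

end
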